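(* Let $a,b$ be distinct elements of $\{6,7,8\}$. Suppose $G$ is a planar graph with no cycles of length $4$, $a$, $b$ or $9$, $s\ge1$, $H$ is a cover of $G$ with respect to $L(v)=\{1,\dots,s\}$ for all $v$, and $F=(f_1,\dots,f_s)$ with $f_i(v)\in\{0,1,2\}$ and $f_1(v)+\cdots+f_s(v)\ge 3$ for all $v$, such that $(G,H)$ has no DP-$F$-coloring, and suppose $|V(G)|$ is minimum among all such $(G,H,F)$ (a minimal counterexample). Then every vertex of $G$ has degree at least $3$.
   Context: A cover $H$ of $G$ w.r.t. $L$ has vertex set $\{(u,c):c\in L(u)\}$, each $\{u\}\times L(u)$ is a clique, for each edge $uv$ the edges between $\{u\}\times L(u)$ and $\{v\}\times L(v)$ form a matching, and there are no such edges for non-adjacent $u,v$. A representative set contains exactly one vertex of each $\{v\}\times L(v)$. A DP-$F$-coloring of $(G,H)$ is a representative set $R$ admitting an ordering in which each $(v,i)\in R$ has fewer than $f_i(v)$ $H$-neighbors among earlier elements of $R$. *)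

theory Defs
  imports "HOL-Analysis.Analysis"
begin

definition simple_graph :: "'v set \<Rightarrow> 'v set set \<Rightarrow> bool" where
  "simple_graph V E \<longleftrightarrow> finite V \<and>
     (\<forall>e\<in>E. \<exists>u v. e = {u, v} \<and> u \<noteq> v \<and> u \<in> V \<and> v \<in> V)"

definition degree :: "'v set set \<Rightarrow> 'v \<Rightarrow> nat" where
  "degree E v = card {u. {v, u} \<in> E}"

definition has_cycle_of_length :: "'v set \<Rightarrow> 'v set set \<Rightarrow> nat \<Rightarrow> bool" where
  "has_cycle_of_length V E k \<longleftrightarrow> 3 \<le> k \<and>
     (\<exists>xs. length xs = k \<and> distinct xs \<and> set xs \<subseteq> V \<and>
        (\<forall>i<k. {xs ! i, xs ! ((i + 1) mod k)} \<in> E))"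

definition planar :: "'v set \<Rightarrow> 'v set set \<Rightarrow> bool" where
  "planar V E \<longleftrightarrow> (\<exists>(p :: 'v \<Rightarrow> real^2) (\<gamma> :: 'v set \<Rightarrow> real \<Rightarrow> real^2).
     inj_on p V \<and>
     (\<forall>e\<in>E. arc (\<gamma> e) \<and> {pathstart (\<gamma> e), pathfinish (\<gamma> e)} = p ` e \<and>
              path_image (\<gamma> e) \<inter> p ` V = p ` e) \<and>
     (\<forall>e\<in>E. \<forall>e'\<in>E. e \<noteq> e' \<longrightarrow> path_image (\<gamma> e) \<inter> path_image (\<gamma> e') \<subseteq> p ` (e \<inter> e')))"

text \<open>A cover H (edge set EH) of G = (V,E) w.r.t. the list assignment L.
  Vertex set of H is {(u,c). u \<in> V, c \<in> L u}.\<close>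
definition is_cover :: "'v set \<Rightarrow> 'v set set \<Rightarrow> ('v \<Rightarrow> nat set) \<Rightarrow> ('v \<times> nat) set set \<Rightarrow> bool" where
  "is_cover V E L EH \<longleftrightarrow>
     simple_graph (Sigma V L) EH \<and>
     (\<forall>u\<in>V. \<forall>c\<in>L u. \<forall>c'\<in>L u. c \<noteq> c' \<longrightarrow> {(u, c), (u, c')} \<in> EH) \<and>
     (\<forall>u c v d. {(u, c), (v, d)} \<in> EH \<and> u \<noteq> v \<longrightarrow> {u, v} \<in> E) \<and>
     (\<forall>u v c d d'. u \<noteq> v \<and> {(u, c), (v, d)} \<in> EH \<and> {(u, c), (v, d')} \<in> EH \<longrightarrow> d = d') \<and>
     (\<forall>u v c c' d. u \<noteq> v \<and> {(u, c), (v, d)} \<in> EH \<and> {(u, c'), (v, d)} \<in> EH \<longrightarrow> c = c')"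

definition representative_set :: "'v set \<Rightarrow> ('v \<Rightarrow> nat set) \<Rightarrow> ('v \<times> nat) set \<Rightarrow> bool" where
  "representative_set V L R \<longleftrightarrow> R \<subseteq> Sigma V L \<and> (\<forall>v\<in>V. \<exists>!c. (v, c) \<in> R)"

text \<open>DP-F-coloring, F = (f_1,...,f_s) given as f i v.  An ordering of R is a
  distinct list enumerating R.\<close>
definition DP_F_coloring :: "'v set \<Rightarrow> ('v \<Rightarrow> nat set) \<Rightarrow> ('v \<times> nat) set set
     \<Rightarrow> (nat \<Rightarrow> 'v \<Rightarrow> nat) \<Rightarrow> ('v \<times> nat) set \<Rightarrow> bool" where
  "DP_F_coloring V L EH f R \<longleftrightarrow> representative_set V L R \<and>
     (\<exists>xs. distinct xs \<and> set xs = R \<and>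
        (\<forall>j<length xs. card {y \<in> set (take j xs). {y, xs ! j} \<in> EH}
                         < f (snd (xs ! j)) (fst (xs ! j))))"

text \<open>The hypotheses of the counterexample (without minimality).\<close>
definition counterexample :: "nat \<Rightarrow> nat \<Rightarrow> 'v set \<Rightarrow> 'v set set \<Rightarrow> nat
     \<Rightarrow> ('v \<times> nat) set set \<Rightarrow> (nat \<Rightarrow> 'v \<Rightarrow> nat) \<Rightarrow> bool" where
  "counterexample a b V E s EH f \<longleftrightarrow>
     simple_graph V E \<and> planar V E \<and>
     \<not> has_cycle_of_length V E 4 \<and> \<not> has_cycle_of_length V E a \<and>
     \<not> has_cycle_of_length V E b \<and> \<not> has_cycle_of_length V E 9 \<and>
     1 \<le> s \<and> is_cover V E (\<lambda>_. {1..s}) EH \<and>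
     (\<forall>v\<in>V. (\<forall>i\<in>{1..s}. f i v \<in> {0, 1, 2}) \<and> (\<Sum>i=1..s. f i v) \<ge> 3) \<and>
     \<not> (\<exists>R. DP_F_coloring V (\<lambda>_. {1..s}) EH f R)"

end

theory Submission
  imports Defs
begin

text \<open>Suppose v has degree at most 2. Deleting v keeps every hypothesis of a
  counterexample (planarity and the excluded cycle lengths pass to subgraphs; the
  conditions on a and b play no further role), so by minimality G - v, with the
  restricted cover, has a DP-F-colouring R. Every vertex u of G - v has exactly one
  vertex (u, c) in R, and (u, c) is matched to at most one (v, i). Hence the numbers of
  neighbours in R of (v, 1), ..., (v, s) add up to at most deg v < 3, which is at most
  f_1(v) + ... + f_s(v). So some (v, i) has fewer than f_i(v) neighbours in R and can be
  put last in the ordering of R, a contradiction.\<close>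

definition induced_edges :: "'a set \<Rightarrow> 'a set set \<Rightarrow> 'a set set" where
  "induced_edges W E = {e \<in> E. e \<subseteq> W}"

lemma simple_graph_induced:
  assumes "simple_graph V E" and "W \<subseteq> V"
  shows "simple_graph W (induced_edges W E)"
  unfolding simple_graph_def
proof (intro conjI ballI)
  show "finite W"
    using assms finite_subset unfolding simple_graph_def by blast
  fix e assume "e \<in> induced_edges W E"
  then have "e \<in> E" and "e \<subseteq> W"
    unfolding induced_edges_def by auto
  moreover obtain u w where "e = {u, w}" and "u \<noteq> w"
    using \<open>e \<in> E\<close> assms(1) unfolding simple_graph_def by blast
  ultimately show "\<exists>u w. e = {u, w} \<and> u \<noteq> w \<and> u \<in> W \<and> w \<in> W"
    by blast
qed

lemma has_cycle_of_length_subgraph: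
  assumes "W \<subseteq> V" and "E' \<subseteq> E" and "has_cycle_of_length W E' k"
  shows "has_cycle_of_length V E k"
proof -
  obtain xs where "3 \<le> k" "length xs = k" "distinct xs" "set xs \<subseteq> W"
    and "\<forall>i<k. {xs ! i, xs ! ((i + 1) mod k)} \<in> E'"
    using assms(3) unfolding has_cycle_of_length_def by blast
  then show ?thesis
    unfolding has_cycle_of_length_def using assms(1,2) by blast
qed

lemma planar_subgraph:
  assumes "planar V E" and "W \<subseteq> V" and "E' \<subseteq> E" and "\<forall>e\<in>E'. e \<subseteq> W"
  shows "planar W E'"
proof -
  obtain p :: "_ \<Rightarrow> real^2" and \<gamma> where inj: "inj_on p V"
    and arcs: "\<forall>e\<in>E. arc (\<gamma> e) \<and> {pathstart (\<gamma> e), pathfinish (\<gamma> e)} = p ` e \<and>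
                 path_image (\<gamma> e) \<inter> p ` V = p ` e"
    and crossings: "\<forall>e\<in>E. \<forall>e'\<in>E. e \<noteq> e' \<longrightarrow>
                 path_image (\<gamma> e) \<inter> path_image (\<gamma> e') \<subseteq> p ` (e \<inter> e')"
    using assms(1) unfolding planar_def by blast
  have image_W: "path_image (\<gamma> e) \<inter> p ` W = p ` e" if "e \<in> E'" for e
  proof
    have "e \<in> E" and "e \<subseteq> W" using that assms(3,4) by auto
    show "path_image (\<gamma> e) \<inter> p ` W \<subseteq> p ` e"
      using arcs \<open>e \<in> E\<close> assms(2) by blast
    have "p ` e \<subseteq> path_image (\<gamma> e)"
      using arcs \<open>e \<in> E\<close> pathstart_in_path_image pathfinish_in_path_image by blast
    then show "p ` e \<subseteq> path_image (\<gamma> e) \<inter> p ` W"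
      using \<open>e \<subseteq> W\<close> by blast
  qed
  show ?thesis
    unfolding planar_def
  proof (intro exI conjI)
    show "inj_on p W"
      using inj assms(2) by (rule inj_on_subset)
    show "\<forall>e\<in>E'. arc (\<gamma> e) \<and> {pathstart (\<gamma> e), pathfinish (\<gamma> e)} = p ` e \<and>
                 path_image (\<gamma> e) \<inter> p ` W = p ` e"
      using arcs image_W assms(3) by blast
    show "\<forall>e\<in>E'. \<forall>e'\<in>E'. e \<noteq> e' \<longrightarrow>
                 path_image (\<gamma> e) \<inter> path_image (\<gamma> e') \<subseteq> p ` (e \<inter> e')"
      using crossings assms(3) by blast
  qed
qed

lemma is_cover_induced:
  assumes "is_cover V E L EH" and "W \<subseteq> V"
  shows "is_cover W (induced_edges W E) L (induced_edges (Sigma W L) EH)"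
proof -
  have graph: "simple_graph (Sigma V L) EH"
    and cliques: "\<forall>u\<in>V. \<forall>c\<in>L u. \<forall>c'\<in>L u. c \<noteq> c' \<longrightarrow> {(u, c), (u, c')} \<in> EH"
    and edges: "\<forall>u c w d. {(u, c), (w, d)} \<in> EH \<and> u \<noteq> w \<longrightarrow> {u, w} \<in> E"
    and matching1: "\<forall>u w c d d'. u \<noteq> w \<and> {(u, c), (w, d)} \<in> EH \<and> {(u, c), (w, d')} \<in> EH \<longrightarrow> d = d'"
    and matching2: "\<forall>u w c c' d. u \<noteq> w \<and> {(u, c), (w, d)} \<in> EH \<and> {(u, c'), (w, d)} \<in> EH \<longrightarrow> c = c'"
    using assms(1) unfolding is_cover_def by - (elim conjE, assumption)+
  have "Sigma W L \<subseteq> Sigma V L"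
    using assms(2) by blast
  have sub: "induced_edges (Sigma W L) EH \<subseteq> EH"
    unfolding induced_edges_def by blast
  show ?thesis
    unfolding is_cover_def
  proof (intro conjI allI ballI impI)
    show "simple_graph (Sigma W L) (induced_edges (Sigma W L) EH)"
      using graph \<open>Sigma W L \<subseteq> Sigma V L\<close> by (rule simple_graph_induced)
  next
    fix u c c' assume "u \<in> W" and "c \<in> L u" and "c' \<in> L u" and "c \<noteq> c'"
    then show "{(u, c), (u, c')} \<in> induced_edges (Sigma W L) EH"
      using cliques assms(2) unfolding induced_edges_def by auto
  next
    fix u c w d
    assume "{(u, c), (w, d)} \<in> induced_edges (Sigma W L) EH \<and> u \<noteq> w"
    then have "{(u, c), (w, d)} \<in> EH" and "u \<noteq> w" and "u \<in> W" and "w \<in> W"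
      unfolding induced_edges_def by auto
    then show "{u, w} \<in> induced_edges W E"
      using edges unfolding induced_edges_def by blast
  next
    fix u w c d d'
    assume "u \<noteq> w \<and> {(u, c), (w, d)} \<in> induced_edges (Sigma W L) EH
      \<and> {(u, c), (w, d')} \<in> induced_edges (Sigma W L) EH"
    then show "d = d'"
      using matching1 sub by blast
  next
    fix u w c c' d
    assume "u \<noteq> w \<and> {(u, c), (w, d)} \<in> induced_edges (Sigma W L) EH
      \<and> {(u, c'), (w, d)} \<in> induced_edges (Sigma W L) EH"
    then show "c = c'"
      using matching2 sub by blast
  qed
qed

lemma counterexample_induced:
  assumes "counterexample a b V E s EH f" and "W \<subseteq> V"
    and "\<not> (\<exists>R. DP_F_coloring W (\<lambda>_. {1..s}) (induced_edges (Sigma W (\<lambda>_. {1..s})) EH) f R)"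
  shows "counterexample a b W (induced_edges W E) s (induced_edges (Sigma W (\<lambda>_. {1..s})) EH) f"
proof -
  have graph: "simple_graph V E" and "planar V E"
    and cycles: "\<not> has_cycle_of_length V E 4" "\<not> has_cycle_of_length V E a"
      "\<not> has_cycle_of_length V E b" "\<not> has_cycle_of_length V E 9"
    and "1 \<le> s" and cover: "is_cover V E (\<lambda>_. {1..s}) EH"
    and weights: "\<forall>v\<in>V. (\<forall>i\<in>{1..s}. f i v \<in> {0, 1, 2}) \<and> (\<Sum>i=1..s. f i v) \<ge> 3"
    using assms(1) unfolding counterexample_def by - (elim conjE, assumption)+
  have sub: "induced_edges W E \<subseteq> E" and inside: "\<forall>e\<in>induced_edges W E. e \<subseteq> W"
    unfolding induced_edges_def by auto
  have "\<not> has_cycle_of_length W (induced_edges W E) k" if "\<not> has_cycle_of_length V E k" for k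
    using that has_cycle_of_length_subgraph[OF assms(2) sub] by blast
  then show ?thesis
    unfolding counterexample_def
    using simple_graph_induced[OF graph assms(2)]
      planar_subgraph[OF \<open>planar V E\<close> assms(2) sub inside]
      is_cover_induced[OF cover assms(2)] cycles \<open>1 \<le> s\<close> weights assms(2,3)
    by (simp add: subset_iff)
qed

lemma DP_F_coloring_insert:
  assumes col: "DP_F_coloring (V - {v}) L (induced_edges (Sigma (V - {v}) L) EH) f R"
    and "v \<in> V" and "i \<in> L v"
    and few: "card {y \<in> R. {y, (v, i)} \<in> EH} < f i v"
  shows "DP_F_coloring V L EH f (insert (v, i) R)"
proof -
  obtain xs where rep: "representative_set (V - {v}) L R"
    and "distinct xs" and set_xs: "set xs = R"
    and greedy: "\<forall>j<length xs. card {y \<in> set (take j xs).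
        {y, xs ! j} \<in> induced_edges (Sigma (V - {v}) L) EH} < f (snd (xs ! j)) (fst (xs ! j))"
    using col unfolding DP_F_coloring_def by blast
  have R_sub: "R \<subseteq> Sigma (V - {v}) L"
    using rep unfolding representative_set_def by blast
  then have "(v, i) \<notin> R" by blast
  define ys where "ys = xs @ [(v, i)]"
  have "representative_set V L (insert (v, i) R)"
    using rep R_sub assms(2,3) unfolding representative_set_def by auto
  moreover have "distinct ys" and "set ys = insert (v, i) R"
    using \<open>distinct xs\<close> set_xs \<open>(v, i) \<notin> R\<close> unfolding ys_def by auto
  moreover have "card {y \<in> set (take j ys). {y, ys ! j} \<in> EH} < f (snd (ys ! j)) (fst (ys ! j))"
    if "j < length ys" for j
  proof (cases "j < length xs")
    case True
    have "set (take j xs) \<subseteq> Sigma (V - {v}) L" and "xs ! j \<in> Sigma (V - {v}) L"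
      using R_sub set_xs True by (auto dest: in_set_takeD)
    then have "{y \<in> set (take j xs). {y, xs ! j} \<in> EH}
        = {y \<in> set (take j xs). {y, xs ! j} \<in> induced_edges (Sigma (V - {v}) L) EH}"
      unfolding induced_edges_def by blast
    then show ?thesis
      using greedy True unfolding ys_def by (simp add: nth_append)
  next
    case False
    then have "j = length xs"
      using that unfolding ys_def by simp
    then show ?thesis
      using few set_xs unfolding ys_def by simp
  qed
  ultimately show ?thesis
    unfolding DP_F_coloring_def by blast
qed

lemma neighbours_subset_vertices:
  assumes "simple_graph V E"
  shows "{u. {v, u} \<in> E} \<subseteq> V"
proof
  fix u assume "u \<in> {u. {v, u} \<in> E}"
  then obtain x y where "{v, u} = {x, y}" and "x \<in> V" and "y \<in> V"
    using assms unfolding simple_graph_def by blast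
  then show "u \<in> V"
    by (metis doubleton_eq_iff)
qed

lemma sum_card_cover_neighbours_le_degree:
  assumes graph: "simple_graph V E" and cover: "is_cover V E L EH" and "finite (L v)"
    and rep: "representative_set (V - {v}) L R"
  shows "(\<Sum>i\<in>L v. card {y \<in> R. {y, (v, i)} \<in> EH}) \<le> degree E v"
proof -
  define N where "N i = {y \<in> R. {y, (v, i)} \<in> EH}" for i
  have R_sub: "R \<subseteq> Sigma (V - {v}) L" and unique: "\<forall>u\<in>V - {v}. \<exists>!c. (u, c) \<in> R"
    using rep unfolding representative_set_def by auto
  have "simple_graph (Sigma V L) EH"
    using cover unfolding is_cover_def by (rule conjunct1)
  then have "finite (Sigma V L)"
    unfolding simple_graph_def by (rule conjunct1)
  moreover have "R \<subseteq> Sigma V L"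
    using R_sub by blast
  ultimately have "finite R"
    by (rule finite_subset[rotated])
  then have finite_N: "finite (N i)" for i
    unfolding N_def by simp
  have "finite V"
    using graph unfolding simple_graph_def by (rule conjunct1)
  then have finite_neighbours: "finite {u. {v, u} \<in> E}"
    using neighbours_subset_vertices[OF graph] by (rule finite_subset[rotated])
  have matching: "\<And>u c d d'. u \<noteq> v \<Longrightarrow> {(u, c), (v, d)} \<in> EH \<Longrightarrow> {(u, c), (v, d')} \<in> EH \<Longrightarrow> d = d'"
    using cover unfolding is_cover_def by blast
  have "i = i' \<and> c = c'" if "(u, c) \<in> N i" and "(u, c') \<in> N i'" for i i' u c c'
  proof -
    have "(u, c) \<in> R" "(u, c') \<in> R" "{(u, c), (v, i)} \<in> EH" "{(u, c'), (v, i')} \<in> EH"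
      using that by (simp_all add: N_def)
    moreover have "u \<in> V - {v}"
      using R_sub \<open>(u, c) \<in> R\<close> by blast
    ultimately have "c = c'"
      using unique by blast
    then show ?thesis
      using matching \<open>u \<in> V - {v}\<close> \<open>{(u, c), (v, i)} \<in> EH\<close> \<open>{(u, c'), (v, i')} \<in> EH\<close>
      by blast
  qed
  then have "inj_on (\<lambda>(i, y). fst y) (Sigma (L v) N)"
    unfolding inj_on_def by auto
  moreover have "{v, u} \<in> E" if "(u, c) \<in> N i" for i u c
  proof -
    have "(u, c) \<in> R" and "{(u, c), (v, i)} \<in> EH"
      using that by (simp_all add: N_def)
    moreover have "u \<noteq> v"
      using R_sub \<open>(u, c) \<in> R\<close> by blast
    ultimately have "{u, v} \<in> E"
      using cover unfolding is_cover_def by blast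
    then show ?thesis
      by (simp add: insert_commute)
  qed
  then have "(\<lambda>(i, y). fst y) ` Sigma (L v) N \<subseteq> {u. {v, u} \<in> E}"
    by auto
  ultimately have "card (Sigma (L v) N) \<le> card {u. {v, u} \<in> E}"
    using finite_neighbours by (rule card_inj_on_le)
  then show ?thesis
    using \<open>finite (L v)\<close> finite_N unfolding N_def degree_def by (simp add: card_SigmaI)
qed

lemma DP_F_coloring_extend:
  assumes "simple_graph V E" and "is_cover V E L EH" and "v \<in> V" and "finite (L v)"
    and "degree E v < (\<Sum>i\<in>L v. f i v)"
    and col: "DP_F_coloring (V - {v}) L (induced_edges (Sigma (V - {v}) L) EH) f R"
  shows "\<exists>i\<in>L v. DP_F_coloring V L EH f (insert (v, i) R)"
proof -
  have "representative_set (V - {v}) L R"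
    using col unfolding DP_F_coloring_def by blast
  then have "(\<Sum>i\<in>L v. card {y \<in> R. {y, (v, i)} \<in> EH}) \<le> degree E v"
    by (rule sum_card_cover_neighbours_le_degree[OF assms(1,2,4)])
  then have less: "(\<Sum>i\<in>L v. card {y \<in> R. {y, (v, i)} \<in> EH}) < (\<Sum>i\<in>L v. f i v)"
    using assms(5) by (rule le_less_trans)
  have "\<exists>i\<in>L v. card {y \<in> R. {y, (v, i)} \<in> EH} < f i v"
  proof (rule ccontr)
    assume "\<not> ?thesis"
    then have "(\<Sum>i\<in>L v. f i v) \<le> (\<Sum>i\<in>L v. card {y \<in> R. {y, (v, i)} \<in> EH})"
      by (intro sum_mono) (simp add: not_less)
    with less show False
      by simp
  qed
  then show ?thesis
    using DP_F_coloring_insert[OF col \<open>v \<in> V\<close>] by blast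
qed

theorem lemma3:
  fixes a b s :: nat and V :: "nat set" and E :: "nat set set"
    and EH :: "(nat \<times> nat) set set" and f :: "nat \<Rightarrow> nat \<Rightarrow> nat"
  assumes "a \<in> {6, 7, 8}" and "b \<in> {6, 7, 8}" and "a \<noteq> b"
    and "counterexample a b V E s EH f"
    and "\<And>(V' :: nat set) E' s' EH' f'. counterexample a b V' E' s' EH' f' \<Longrightarrow> card V \<le> card V'"
  shows "\<forall>v\<in>V. degree E v \<ge> 3"
proof (rule ccontr)
  assume "\<not> (\<forall>v\<in>V. degree E v \<ge> 3)"
  then obtain v where "v \<in> V" and low: "degree E v < 3"
    by auto
  let ?L = "\<lambda>_ :: nat. {1..s}"
  let ?W = "V - {v}"
  have graph: "simple_graph V E" and cover: "is_cover V E ?L EH"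
    and weights: "\<forall>v\<in>V. (\<forall>i\<in>{1..s}. f i v \<in> {0, 1, 2}) \<and> (\<Sum>i=1..s. f i v) \<ge> 3"
    and uncolourable: "\<not> (\<exists>R. DP_F_coloring V ?L EH f R)"
    using assms(4) unfolding counterexample_def by - (elim conjE, assumption)+
  have "finite V"
    using graph unfolding simple_graph_def by (rule conjunct1)
  have "3 \<le> (\<Sum>i=1..s. f i v)"
    using weights \<open>v \<in> V\<close> by blast
  with low have low_degree: "degree E v < (\<Sum>i\<in>?L v. f i v)"
    by simp
  have "\<not> (\<exists>R. DP_F_coloring ?W ?L (induced_edges (Sigma ?W ?L) EH) f R)"
  proof
    assume "\<exists>R. DP_F_coloring ?W ?L (induced_edges (Sigma ?W ?L) EH) f R"
    then obtain R where "DP_F_coloring ?W ?L (induced_edges (Sigma ?W ?L) EH) f R"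
      by blast
    from DP_F_coloring_extend[OF graph cover \<open>v \<in> V\<close> finite_atLeastAtMost low_degree this]
    show False
      using uncolourable by blast
  qed
  then have "counterexample a b ?W (induced_edges ?W E) s (induced_edges (Sigma ?W ?L) EH) f"
    by (rule counterexample_induced[OF assms(4) Diff_subset])
  then have "card V \<le> card ?W"
    by (rule assms(5))
  moreover have "card ?W < card V"
    using \<open>finite V\<close> \<open>v \<in> V\<close> by (rule card_Diff1_less)
  ultimately show False
    by simp
qed

end
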